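(* Let $t$ be the unique real root of $t\,(2\log t+1/2)=2\log 2-1/2$ and $c=1+1/t$. Then there is a function $\varepsilon(n)=o(n)$ such that every integer-valued polynomial $f$ of degree $n\ge1$ satisfies $E(f)\le cn+\varepsilon(n)$.
   Context: A polynomial $f\in\mathbb{Q}[x]$ is integer-valued if $f(m)\in\mathbb{Z}$ for every $m\in\mathbb{Z}$. $E(f)=\#\{m\in\mathbb{Z}: |f(m)|=1\}$. *)

theory Defs
  imports "HOL-Computational_Algebra.Polynomial" "HOL-Library.Landau_Symbols"
begin

definition int_valued :: "rat poly \<Rightarrow> bool" where
  "int_valued f \<longleftrightarrow> (\<forall>m::int. poly f (of_int m) \<in> \<int>)"

definition E :: "rat poly \<Rightarrow> nat" where
  "E f = card {m::int. \<bar>poly f (of_int m)\<bar> = 1}"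

definition t_const :: real where
  "t_const = (THE t. t > 0 \<and> t * (2 * ln t + 1/2) = 2 * ln 2 - 1/2)"

definition c_const :: real where
  "c_const = 1 + 1 / t_const"

end

(* Let f have degree n and let y_0 < ... < y_N be integers with |f(y_k)| = 1. For any n + 1 of them,
   Lagrange interpolation writes the leading coefficient of f as sum_k f(y_k) / prod_(l ~= k) (y_k - y_l),
   and n! times it is a nonzero integer, so 1 <= n! * sum_k prod_(l ~= k) 1 / |y_k - y_l|. Since
   |y_k - y_l| >= |k - l|, the same inequality holds for every set of n + 1 indices in {0..N}.
   For N = 78 M we use the 42 M + 1 indices filling [0, 12 M] and [66 M, 78 M] together with the
   multiples of 3 in between. On each block of this set the distance product to the other indices is
   log-concave in the position, and Stirling-type bounds show that the sum, multiplied by (42 M)! and by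
   the factor (78 M)^42 paying for discarding up to 42 indices, tends to 0. Hence E f <= 78 M whenever 42 (M - 1) < n <= 42 M, that is E f <= 13 n / 7 + 78, and
   13 / 7 <= c because t <= 7 / 6. *)

theory Submission
  imports Defs "HOL-Analysis.Convex" "HOL-Analysis.Harmonic_Numbers" "HOL-Real_Asymp.Real_Asymp"
begin

section \<open>Lagrange interpolation and integer-valued polynomials\<close>

lemma coeff_eq_lagrange_sum:
  fixes p :: "'a::field poly" and x :: "'i \<Rightarrow> 'a"
  assumes fin: "finite I" and card: "card I = Suc n" and inj: "inj_on x I" and deg: "degree p \<le> n"
  shows "coeff p n = (\<Sum>i\<in>I. poly p (x i) / (\<Prod>j\<in>I-{i}. x i - x j))"
proof -
  define w where "w i = poly p (x i) / (\<Prod>j\<in>I-{i}. x i - x j)" for i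
  define b where "b i = (\<Prod>j\<in>I-{i}. [:- x j, 1:])" for i
  define q where "q = (\<Sum>i\<in>I. smult (w i) (b i))"
  have deg_b: "degree (b i) = n" and coeff_b: "coeff (b i) n = 1" if "i \<in> I" for i
  proof -
    have "degree (b i) = card (I - {i})"
      unfolding b_def by (subst degree_prod_eq_sum_degree) auto
    then show "degree (b i) = n" using that fin card by simp
    moreover have "lead_coeff (b i) = 1"
      unfolding b_def by (simp add: lead_coeff_prod)
    ultimately show "coeff (b i) n = 1" by simp
  qed
  have poly_b: "poly (b i) (x k) = (if k = i then (\<Prod>j\<in>I-{i}. x i - x j) else 0)"
    if "i \<in> I" "k \<in> I" for i k
    using that fin by (auto simp: b_def poly_prod intro: prod_zero)
  have "poly q (x k) = poly p (x k)" if k: "k \<in> I" for k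
  proof -
    have "poly q (x k) = (\<Sum>i\<in>I. w i * poly (b i) (x k))"
      by (simp add: q_def poly_sum)
    also have "\<dots> = (\<Sum>i\<in>I. if i = k then w k * (\<Prod>j\<in>I-{k}. x k - x j) else 0)"
      using k by (intro sum.cong) (auto simp: poly_b)
    also have "\<dots> = w k * (\<Prod>j\<in>I-{k}. x k - x j)"
      using fin k by simp
    also have "\<dots> = poly p (x k)"
      using fin inj k by (auto simp: w_def inj_on_def)
    finally show ?thesis .
  qed
  moreover have "degree q \<le> n"
    unfolding q_def using deg_b fin by (intro degree_sum_le order.trans[OF degree_smult_le]) auto
  moreover have "card (x ` I) = Suc n"
    using card inj by (simp add: card_image)
  ultimately have "p = q"
    using deg by (intro poly_eqI_degree[of "x ` I"]) auto
  then have "coeff p n = (\<Sum>i\<in>I. w i * coeff (b i) n)"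
    by (simp add: q_def coeff_sum)
  then show ?thesis
    by (simp add: coeff_b w_def)
qed

lemma prod_abs_diff_atMost:
  fixes p m :: nat
  assumes "p \<le> m"
  shows "(\<Prod>j\<in>{..m}-{p}. \<bar>of_nat p - of_nat j :: 'a::linordered_idom\<bar>) = fact p * fact (m - p)"
proof -
  have split: "{..m}-{p} = {..<p} \<union> {p<..m}"
    using assms by auto
  have "(\<Prod>j\<in>{..<p}. \<bar>of_nat p - of_nat j :: 'a\<bar>) = (\<Prod>k\<in>{1..p}. of_nat k)"
    by (rule prod.reindex_bij_witness[where i = "\<lambda>k. p - k" and j = "\<lambda>j. p - j"])
      (auto simp: of_nat_diff)
  moreover have "(\<Prod>j\<in>{p<..m}. \<bar>of_nat p - of_nat j :: 'a\<bar>) = (\<Prod>k\<in>{1..m-p}. of_nat k)"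
    by (rule prod.reindex_bij_witness[where i = "\<lambda>k. p + k" and j = "\<lambda>j. j - p"])
      (auto simp: of_nat_diff)
  ultimately show ?thesis
    unfolding split by (subst prod.union_disjoint) (auto simp: fact_prod)
qed

lemma int_valued_fact_mult_coeff_Ints:
  assumes "int_valued f" "degree f \<le> n"
  shows "fact n * coeff f n \<in> \<int>"
proof -
  define P where "P i = (\<Prod>j\<in>{..n}-{i}. of_nat i - of_nat j :: rat)" for i
  have "coeff f n = (\<Sum>i\<in>{..n}. poly f (of_nat i) / P i)"
    unfolding P_def using assms(2) by (intro coeff_eq_lagrange_sum) (auto simp: inj_on_def)
  then have "fact n * coeff f n = (\<Sum>i\<in>{..n}. poly f (of_int (int i)) * (fact n / P i))"
    by (simp add: sum_distrib_left mult.commute)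
  also have "\<dots> \<in> \<int>"
  proof (intro Ints_sum Ints_mult)
    fix i assume "i \<in> {..n}"
    then have i: "i \<le> n" by simp
    show "poly f (of_int (int i)) \<in> \<int>"
      using assms(1) unfolding int_valued_def by (metis of_int_of_nat_eq)
    have "\<bar>P i\<bar> = fact i * fact (n - i)"
      unfolding P_def abs_prod using prod_abs_diff_atMost[OF i] .
    moreover have "fact n / (fact i * fact (n - i)) = (of_nat (n choose i) :: rat)"
      by (rule binomial_fact[OF i, symmetric])
    ultimately have "fact n / \<bar>P i\<bar> \<in> \<int>"
      by simp
    then show "fact n / P i \<in> \<int>"
      by (cases "P i \<ge> 0") (auto simp: minus_in_Ints_iff)
  qed
  finally show ?thesis .
qed

lemma E_le_twice_degree:
  fixes f :: "rat poly"
  assumes "degree f \<ge> 1"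
  shows "E f \<le> 2 * degree f"
proof -
  define p where "p = (f - 1) * (f + 1)"
  have "f - 1 \<noteq> 0" "f + 1 \<noteq> 0"
    using assms by (auto simp: eq_neg_iff_add_eq_0[symmetric])
  then have p: "p \<noteq> 0"
    by (simp add: p_def)
  have "E f = card (of_int ` {m. \<bar>poly f (of_int m)\<bar> = 1} :: rat set)"
    unfolding E_def by (rule card_image[symmetric]) (simp add: inj_on_def)
  also have "\<dots> \<le> card {x. poly p x = 0}"
    using p by (intro card_mono poly_roots_finite) (auto simp: p_def abs_eq_iff)
  also have "\<dots> \<le> degree p"
    using p by (rule card_poly_roots_bound)
  also have "\<dots> \<le> degree (f - 1) + degree (f + 1)"
    unfolding p_def by (rule degree_mult_le)
  also have "\<dots> \<le> 2 * degree f"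
    using degree_diff_le[of f "degree f" 1] degree_add_le[of f "degree f" 1] by simp
  finally show ?thesis .
qed

section \<open>Node weights\<close>

definition node_weight :: "int set \<Rightarrow> int \<Rightarrow> real" where
  "node_weight T x = 1 / (\<Prod>y\<in>T-{x}. real_of_int \<bar>x - y\<bar>)"

lemma node_weight_nonneg: "0 \<le> node_weight T x"
  by (simp add: node_weight_def prod_nonneg)

lemma abs_coeff_le_node_weight_sum:
  fixes f :: "rat poly" and X :: "int set"
  assumes "finite X" "card X = Suc n" "degree f \<le> n"
    and unit: "\<And>x. x \<in> X \<Longrightarrow> \<bar>poly f (of_int x)\<bar> = 1"
  shows "\<bar>real_of_rat (coeff f n)\<bar> \<le> (\<Sum>x\<in>X. node_weight X x)"
proof -
  have "coeff f n = (\<Sum>x\<in>X. poly f (of_int x) / (\<Prod>y\<in>X-{x}. of_int x - of_int y))"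
    using assms(1-3) by (intro coeff_eq_lagrange_sum) (auto simp: inj_on_def)
  then have "real_of_rat (coeff f n) =
      (\<Sum>x\<in>X. real_of_rat (poly f (of_int x)) / (\<Prod>y\<in>X-{x}. of_int x - of_int y))"
    by (simp add: of_rat_sum of_rat_divide of_rat_prod of_rat_diff)
  also have "\<bar>\<dots>\<bar> \<le> (\<Sum>x\<in>X. \<bar>real_of_rat (poly f (of_int x)) / (\<Prod>y\<in>X-{x}. of_int x - of_int y)\<bar>)"
    by (rule sum_abs)
  also have "\<dots> = (\<Sum>x\<in>X. node_weight X x)"
  proof (intro sum.cong refl)
    fix x assume "x \<in> X"
    then have "\<bar>real_of_rat (poly f (of_int x))\<bar> = 1"
      using unit by simp
    then show "\<bar>real_of_rat (poly f (of_int x)) / (\<Prod>y\<in>X-{x}. of_int x - of_int y)\<bar> = node_weight X x"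
      by (simp add: node_weight_def abs_divide abs_prod)
  qed
  finally show ?thesis .
qed

lemma one_le_fact_mult_sum_node_weight:
  fixes f :: "rat poly" and X :: "int set"
  assumes "int_valued f" "degree f = n" "1 \<le> n" "finite X" "card X = Suc n"
    and "\<And>x. x \<in> X \<Longrightarrow> \<bar>poly f (of_int x)\<bar> = 1"
  shows "1 \<le> fact n * (\<Sum>x\<in>X. node_weight X x)"
proof -
  have "coeff f n \<noteq> 0"
    using assms(2,3) leading_coeff_0_iff[of f] by auto
  then have "1 \<le> \<bar>fact n * coeff f n\<bar>"
    using int_valued_fact_mult_coeff_Ints[OF assms(1)] assms(2) by (intro Ints_nonzero_abs_ge1) auto
  then have "1 \<le> real_of_rat \<bar>fact n * coeff f n\<bar>"
    by simp
  also have "\<dots> = fact n * \<bar>real_of_rat (coeff f n)\<bar>"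
    using of_rat_of_nat_eq[of "fact n", where 'a = real] by (simp add: abs_mult of_rat_mult del: of_rat_of_nat_eq)
  also have "\<dots> \<le> fact n * (\<Sum>x\<in>X. node_weight X x)"
    using assms(2,4-6) by (intro mult_left_mono abs_coeff_le_node_weight_sum) auto
  finally show ?thesis .
qed

lemma inj_on_if_spread:
  fixes \<phi> :: "int \<Rightarrow> int"
  assumes "\<And>k l. k \<in> T \<Longrightarrow> l \<in> T \<Longrightarrow> \<bar>k - l\<bar> \<le> \<bar>\<phi> k - \<phi> l\<bar>"
  shows "inj_on \<phi> T"
proof (rule inj_onI)
  fix a b assume "a \<in> T" "b \<in> T" "\<phi> a = \<phi> b"
  then have "\<bar>a - b\<bar> \<le> \<bar>\<phi> a - \<phi> b\<bar>"
    using assms by blast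
  with \<open>\<phi> a = \<phi> b\<close> show "a = b"
    by simp
qed

lemma node_weight_image_le:
  assumes spread: "\<And>k l. k \<in> T \<Longrightarrow> l \<in> T \<Longrightarrow> \<bar>k - l\<bar> \<le> \<bar>\<phi> k - \<phi> l\<bar>" and k: "k \<in> T"
  shows "node_weight (\<phi> ` T) (\<phi> k) \<le> node_weight T k"
proof -
  have inj: "inj_on \<phi> T"
    using spread by (rule inj_on_if_spread)
  then have "\<phi> ` T - {\<phi> k} = \<phi> ` (T - {k})"
    using k by (auto simp: inj_on_def)
  then have "(\<Prod>y\<in>\<phi> ` T - {\<phi> k}. real_of_int \<bar>\<phi> k - y\<bar>) = (\<Prod>l\<in>T-{k}. real_of_int \<bar>\<phi> k - \<phi> l\<bar>)"
    using inj by (simp add: prod.reindex inj_on_diff)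
  moreover have "(\<Prod>l\<in>T-{k}. real_of_int \<bar>k - l\<bar>) \<le> (\<Prod>l\<in>T-{k}. real_of_int \<bar>\<phi> k - \<phi> l\<bar>)"
  proof (intro prod_mono conjI)
    fix l assume "l \<in> T - {k}"
    then have "\<bar>k - l\<bar> \<le> \<bar>\<phi> k - \<phi> l\<bar>"
      using spread k by simp
    then show "real_of_int \<bar>k - l\<bar> \<le> real_of_int \<bar>\<phi> k - \<phi> l\<bar>"
      by linarith
  qed simp
  moreover have "0 < (\<Prod>l\<in>T-{k}. real_of_int \<bar>k - l\<bar>)"
    by (intro prod_pos) auto
  ultimately show ?thesis
    unfolding node_weight_def by (simp add: frac_le)
qed

lemma sum_node_weight_image_le:
  assumes spread: "\<And>k l. k \<in> T \<Longrightarrow> l \<in> T \<Longrightarrow> \<bar>k - l\<bar> \<le> \<bar>\<phi> k - \<phi> l\<bar>"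
  shows "(\<Sum>x\<in>\<phi> ` T. node_weight (\<phi> ` T) x) \<le> (\<Sum>k\<in>T. node_weight T k)"
proof -
  have "inj_on \<phi> T"
    using spread by (rule inj_on_if_spread)
  then have "(\<Sum>x\<in>\<phi> ` T. node_weight (\<phi> ` T) x) = (\<Sum>k\<in>T. node_weight (\<phi> ` T) (\<phi> k))"
    by (simp add: sum.reindex)
  also have "\<dots> \<le> (\<Sum>k\<in>T. node_weight T k)"
    using spread by (intro sum_mono node_weight_image_le) auto
  finally show ?thesis .
qed

lemma node_weight_subset_le:
  fixes D :: real
  assumes "finite T" "T' \<subseteq> T" "k \<in> T'" "card (T - T') \<le> j" "1 \<le> D"
    and diam: "\<And>l. l \<in> T \<Longrightarrow> real_of_int \<bar>k - l\<bar> \<le> D"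
  shows "node_weight T' k \<le> D ^ j * node_weight T k"
proof -
  have "finite T'"
    using assms(1,2) by (rule finite_subset[rotated])
  have split: "T - {k} = (T' - {k}) \<union> (T - T')"
    using assms(2,3) by auto
  have "(\<Prod>l\<in>T-{k}. real_of_int \<bar>k - l\<bar>) =
      (\<Prod>l\<in>T'-{k}. real_of_int \<bar>k - l\<bar>) * (\<Prod>l\<in>T-T'. real_of_int \<bar>k - l\<bar>)"
    unfolding split by (rule prod.union_disjoint) (use assms(1) \<open>finite T'\<close> in auto)
  also have "\<dots> \<le> (\<Prod>l\<in>T'-{k}. real_of_int \<bar>k - l\<bar>) * D ^ j"
    using assms(4,5) diam by (intro mult_left_mono prod_le_power prod_nonneg) auto
  finally have "(\<Prod>l\<in>T-{k}. real_of_int \<bar>k - l\<bar>) \<le> (\<Prod>l\<in>T'-{k}. real_of_int \<bar>k - l\<bar>) * D ^ j" .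
  moreover have "0 < (\<Prod>l\<in>T-{k}. real_of_int \<bar>k - l\<bar>)" "0 < (\<Prod>l\<in>T'-{k}. real_of_int \<bar>k - l\<bar>)"
    by (intro prod_pos; auto)+
  ultimately show ?thesis
    unfolding node_weight_def by (simp add: field_simps)
qed

lemma sum_node_weight_subset_le:
  fixes D :: real
  assumes "finite T" "T' \<subseteq> T" "card (T - T') \<le> j" "1 \<le> D"
    and diam: "\<And>k l. k \<in> T \<Longrightarrow> l \<in> T \<Longrightarrow> real_of_int \<bar>k - l\<bar> \<le> D"
  shows "(\<Sum>k\<in>T'. node_weight T' k) \<le> D ^ j * (\<Sum>k\<in>T. node_weight T k)"
proof -
  have "(\<Sum>k\<in>T'. node_weight T' k) \<le> (\<Sum>k\<in>T'. D ^ j * node_weight T k)"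
    using assms by (intro sum_mono node_weight_subset_le) auto
  also have "\<dots> \<le> D ^ j * (\<Sum>k\<in>T. node_weight T k)"
    unfolding sum_distrib_left[symmetric] using assms(1,2,4)
    by (intro mult_left_mono sum_mono2 node_weight_nonneg) auto
  finally show ?thesis .
qed

lemma sorted_wrt_less_nth_gap:
  fixes ys :: "int list"
  assumes "sorted_wrt (<) ys" "i < length ys" "j < length ys"
  shows "\<bar>int i - int j\<bar> \<le> \<bar>ys ! i - ys ! j\<bar>"
proof -
  have gap: "int d \<le> ys ! (i + d) - ys ! i" if "i + d < length ys" for i d
    using that
  proof (induction d)
    case (Suc d)
    then have "ys ! (i + d) < ys ! (i + Suc d)"
      using assms(1) by (intro sorted_wrt_nth_less) auto
    with Suc show ?case by simp
  qed simp
  show ?thesis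
    using gap[of i "j - i"] gap[of j "i - j"] assms(2,3) by (cases "i \<le> j") auto
qed

lemma obtain_spread_map:
  fixes S :: "int set"
  assumes "finite S" "N < card S"
  obtains \<phi> where "\<phi> ` {0..int N} \<subseteq> S"
    and "\<And>k l. k \<in> {0..int N} \<Longrightarrow> l \<in> {0..int N} \<Longrightarrow> \<bar>k - l\<bar> \<le> \<bar>\<phi> k - \<phi> l\<bar>"
proof
  define ys where "ys = sorted_list_of_set S"
  have ys: "set ys = S" "length ys = card S"
    using assms(1) by (auto simp: ys_def)
  have len: "nat k < length ys" if "k \<in> {0..int N}" for k
    using that assms ys by auto
  show "(\<lambda>k. ys ! nat k) ` {0..int N} \<subseteq> S"
    using len nth_mem ys(1) by blast
  show "\<bar>k - l\<bar> \<le> \<bar>ys ! nat k - ys ! nat l\<bar>" if "k \<in> {0..int N}" "l \<in> {0..int N}" for k l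
    using sorted_wrt_less_nth_gap[of ys "nat k" "nat l"] len[OF that(1)] len[OF that(2)] that
    by (simp add: ys_def)
qed

lemma E_le_if_node_weight_sum_small:
  fixes f :: "rat poly" and T :: "int set" and N j n :: nat
  assumes "int_valued f" "degree f = n" "1 \<le> n"
    and T: "T \<subseteq> {0..int N}" "n < card T" "card T \<le> n + 1 + j" and "1 \<le> N"
    and small: "fact n * real N ^ j * (\<Sum>x\<in>T. node_weight T x) < 1"
  shows "E f \<le> N"
proof (rule ccontr)
  define S where "S = {m. \<bar>poly f (of_int m)\<bar> = 1}"
  assume "\<not> E f \<le> N"
  then have "N < card S"
    by (simp add: E_def S_def)
  then have "finite S"
    using card.infinite by fastforce
  obtain \<phi> where \<phi>: "\<phi> ` {0..int N} \<subseteq> S"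
    and spread: "\<And>k l. k \<in> {0..int N} \<Longrightarrow> l \<in> {0..int N} \<Longrightarrow> \<bar>k - l\<bar> \<le> \<bar>\<phi> k - \<phi> l\<bar>"
    using obtain_spread_map[OF \<open>finite S\<close> \<open>N < card S\<close>] by blast
  have "finite T"
    using T(1) finite_subset by blast
  obtain T' where T': "T' \<subseteq> T" "card T' = Suc n"
    using obtain_subset_with_card_n[of "Suc n" T] T(2) by auto
  then have "finite T'" "T' \<subseteq> {0..int N}"
    using \<open>finite T\<close> T(1) finite_subset by blast+
  then have spread_T': "\<bar>k - l\<bar> \<le> \<bar>\<phi> k - \<phi> l\<bar>" if "k \<in> T'" "l \<in> T'" for k l
    using that spread by (meson subsetD)
  then have "card (\<phi> ` T') = Suc n"
    using T'(2) by (simp add: card_image inj_on_if_spread)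
  then have "1 \<le> fact n * (\<Sum>x\<in>\<phi> ` T'. node_weight (\<phi> ` T') x)"
    using assms(1-3) \<open>finite T'\<close> \<open>T' \<subseteq> {0..int N}\<close> \<phi>
    by (intro one_le_fact_mult_sum_node_weight) (auto simp: S_def)
  also have "\<dots> \<le> fact n * (\<Sum>k\<in>T'. node_weight T' k)"
    using spread_T' by (intro mult_left_mono sum_node_weight_image_le) auto
  also have "\<dots> \<le> fact n * (real N ^ j * (\<Sum>k\<in>T. node_weight T k))"
  proof (intro mult_left_mono sum_node_weight_subset_le)
    fix k l assume "k \<in> T" "l \<in> T"
    then have "k \<in> {0..int N}" "l \<in> {0..int N}"
      using T(1) by auto
    then have "\<bar>k - l\<bar> \<le> int N"
      by (simp add: abs_le_iff)
    then show "real_of_int \<bar>k - l\<bar> \<le> real N"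
      by (metis of_int_le_iff of_int_of_nat_eq)
  qed (use T T' \<open>finite T\<close> \<open>finite T'\<close> \<open>1 \<le> N\<close> in \<open>auto simp: card_Diff_subset\<close>)
  finally show False
    using small by (simp add: mult.assoc)
qed

lemma node_weight_reflect:
  assumes refl: "\<And>y. y \<in> T \<Longrightarrow> c - y \<in> T"
  shows "node_weight T (c - x) = node_weight T x"
proof -
  have "T - {c - x} = (\<lambda>y. c - y) ` (T - {x})"
  proof
    show "T - {c - x} \<subseteq> (\<lambda>y. c - y) ` (T - {x})"
      using refl by (force intro: image_eqI[where x = "c - _"])
  qed (use refl in auto)
  then have "(\<Prod>y\<in>T - {c - x}. real_of_int \<bar>c - x - y\<bar>) = (\<Prod>z\<in>T - {x}. real_of_int \<bar>x - z\<bar>)"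
    by (simp add: prod.reindex inj_on_def abs_minus_commute)
  then show ?thesis
    by (simp add: node_weight_def)
qed

lemma sum_node_weight_le_twice_lower_half:
  assumes "finite T" and refl: "\<And>y. y \<in> T \<Longrightarrow> c - y \<in> T"
  shows "(\<Sum>x\<in>T. node_weight T x) \<le> 2 * (\<Sum>x\<in>{x\<in>T. 2 * x \<le> c}. node_weight T x)"
proof -
  define L where "L = {x\<in>T. 2 * x \<le> c}"
  define U where "U = {x\<in>T. c < 2 * x}"
  have "finite L" "finite U"
    using assms(1) by (simp_all add: L_def U_def)
  have "(\<Sum>x\<in>U. node_weight T x) = (\<Sum>x\<in>U. node_weight T (c - x))"
    using refl by (simp add: node_weight_reflect)
  also have "\<dots> = (\<Sum>x\<in>(\<lambda>x. c - x) ` U. node_weight T x)"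
    by (simp add: sum.reindex inj_on_def)
  also have "\<dots> \<le> (\<Sum>x\<in>L. node_weight T x)"
    using \<open>finite L\<close> refl by (intro sum_mono2) (auto simp: L_def U_def node_weight_nonneg)
  finally have "(\<Sum>x\<in>U. node_weight T x) \<le> (\<Sum>x\<in>L. node_weight T x)" .
  moreover have "L \<union> U = T" "L \<inter> U = {}"
    by (auto simp: L_def U_def)
  then have "(\<Sum>x\<in>T. node_weight T x) = (\<Sum>x\<in>L. node_weight T x) + (\<Sum>x\<in>U. node_weight T x)"
    using sum.union_disjoint[OF \<open>finite L\<close> \<open>finite U\<close>, of "node_weight T"] by simp
  ultimately show ?thesis
    by (simp add: L_def)
qed

lemma prod_abs_diff_outside_pos:
  fixes C :: "int set"
  assumes "a \<le> b" "\<And>y. y \<in> C \<Longrightarrow> y < a \<or> b < y"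
  shows "0 < (\<Prod>y\<in>C. real_of_int \<bar>a - y\<bar>)" "0 < (\<Prod>y\<in>C. real_of_int \<bar>b - y\<bar>)"
  using assms by (force intro!: prod_pos)+

lemma prod_abs_diff_progression:
  fixes x0 :: int and g m p :: nat
  assumes "0 < g" "p \<le> m"
  shows "(\<Prod>y\<in>(\<lambda>q. x0 + int g * int q) ` {..m} - {x0 + int g * int p}. real_of_int \<bar>x0 + int g * int p - y\<bar>)
    = real g ^ m * fact p * fact (m - p)"
proof -
  have inj: "inj_on (\<lambda>q. x0 + int g * int q) A" for A
    using assms(1) by (auto simp: inj_on_def)
  have "(\<lambda>q. x0 + int g * int q) ` {..m} - {x0 + int g * int p} = (\<lambda>q. x0 + int g * int q) ` ({..m} - {p})"
    using assms(1) by auto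
  then have "(\<Prod>y\<in>(\<lambda>q. x0 + int g * int q) ` {..m} - {x0 + int g * int p}. real_of_int \<bar>x0 + int g * int p - y\<bar>)
      = (\<Prod>q\<in>{..m} - {p}. real g * \<bar>of_nat p - of_nat q\<bar>)"
    using inj by (simp add: prod.reindex abs_mult flip: right_diff_distrib)
  also have "\<dots> = real g ^ m * fact p * fact (m - p)"
    using assms(2) by (simp add: prod.distrib prod_abs_diff_atMost)
  finally show ?thesis .
qed

lemma prod_abs_diff_convex_combination_ge:
  fixes y :: "'i \<Rightarrow> real"
  assumes "0 \<le> \<theta>" "\<theta> \<le> 1" and outside: "\<And>i. i \<in> C \<Longrightarrow> y i < a \<or> b < y i" and "a \<le> b"
  shows "(\<Prod>i\<in>C. \<bar>a - y i\<bar>) powr (1 - \<theta>) * (\<Prod>i\<in>C. \<bar>b - y i\<bar>) powr \<theta>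
    \<le> (\<Prod>i\<in>C. \<bar>(1 - \<theta>) * a + \<theta> * b - y i\<bar>)"
proof -
  have "\<bar>a - y i\<bar> powr (1 - \<theta>) * \<bar>b - y i\<bar> powr \<theta> \<le> \<bar>(1 - \<theta>) * a + \<theta> * b - y i\<bar>"
    if i: "i \<in> C" for i
  proof -
    have "\<bar>a - y i\<bar> powr (1 - \<theta>) * \<bar>b - y i\<bar> powr \<theta> \<le> (1 - \<theta>) * \<bar>a - y i\<bar> + \<theta> * \<bar>b - y i\<bar>"
      using assms outside[OF i] by (intro Youngs_inequality_0) auto
    also have "\<dots> = \<bar>(1 - \<theta>) * a + \<theta> * b - y i\<bar>"
    proof -
      have "\<theta> * a \<le> \<theta> * b" "\<theta> * b - \<theta> * a \<le> b - a"
        using assms mult_left_le_one_le[of "b - a" \<theta>] by (auto simp: mult_left_mono algebra_simps)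
      then show ?thesis
        using outside[OF i] by (auto simp: abs_if algebra_simps)
    qed
    finally show ?thesis .
  qed
  then show ?thesis
    by (simp add: prod_powr_distrib prod.distrib[symmetric] prod_mono)
qed

lemma prod_abs_diff_outside_progression_ge:
  fixes C :: "int set" and x0 :: int and g m p :: nat
  assumes "0 < m" "p \<le> m" and outside: "\<And>y. y \<in> C \<Longrightarrow> y < x0 \<or> x0 + int g * int m < y"
  shows "(\<Prod>y\<in>C. real_of_int \<bar>x0 - y\<bar>) powr (real (m - p) / m)
      * (\<Prod>y\<in>C. real_of_int \<bar>x0 + int g * int m - y\<bar>) powr (real p / m)
    \<le> (\<Prod>y\<in>C. real_of_int \<bar>x0 + int g * int p - y\<bar>)"
proof -
  define \<theta> where "\<theta> = real p / real m"
  have \<theta>: "0 \<le> \<theta>" "\<theta> \<le> 1" "1 - \<theta> = real (m - p) / m"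
    using assms(1,2) by (auto simp: \<theta>_def of_nat_diff field_simps)
  have "(\<Prod>y\<in>C. \<bar>real_of_int x0 - real_of_int y\<bar>) powr (1 - \<theta>) *
      (\<Prod>y\<in>C. \<bar>real_of_int (x0 + int g * int m) - real_of_int y\<bar>) powr \<theta>
      \<le> (\<Prod>y\<in>C. \<bar>(1 - \<theta>) * real_of_int x0 + \<theta> * real_of_int (x0 + int g * int m) - real_of_int y\<bar>)"
  proof (rule prod_abs_diff_convex_combination_ge)
    fix y assume "y \<in> C"
    then show "real_of_int y < real_of_int x0 \<or> real_of_int (x0 + int g * int m) < real_of_int y"
      using outside by (simp only: of_int_less_iff)
  qed (use \<theta> in auto)
  moreover have "(1 - \<theta>) * real_of_int x0 + \<theta> * real_of_int (x0 + int g * int m) = real_of_int (x0 + int g * int p)"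
    using assms(1) by (simp add: \<theta>_def field_simps)
  ultimately show ?thesis
    unfolding \<theta>(3) by (simp add: \<theta>_def)
qed

lemma prod_atLeastAtMost_eq_fact_div:
  assumes "0 < a" "a \<le> b + 1"
  shows "(\<Prod>k\<in>{a..b}. real k) = fact b / fact (a - 1)"
proof -
  have "{1..b} = {1..a - 1} \<union> {a..b}"
    using assms by auto
  then have "fact b = fact (a - 1) * (\<Prod>k\<in>{a..b}. real k)"
    by (simp add: fact_prod prod.union_disjoint)
  then show ?thesis
    by simp
qed

lemma fact_add_le_power_mult_fact:
  assumes "b + j \<le> N"
  shows "fact (b + j) \<le> real N ^ j * fact b"
  using assms
proof (induction j)
  case (Suc j)
  then have "fact (b + Suc j) \<le> real N * (real N ^ j * fact b)"
    by (simp add: fact_Suc mult_mono)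
  then show ?case
    by simp
qed simp

(* The slack j, paid for by the factor N ^ j, absorbs the off-by-one shifts of interval ends. *)
lemma prod_atLeastAtMost_ge_fact_div:
  assumes "0 < a" "a \<le> b + 1" "a - 1 \<le> a'" "b' \<le> b + j" "b + j \<le> N"
  shows "fact b' / (real N ^ j * fact a') \<le> (\<Prod>k\<in>{a..b}. real k)"
proof -
  have "0 < real N ^ j"
    using assms(5) by (cases j) auto
  have "fact b' \<le> (fact (b + j) :: real)"
    using assms(4) by (rule fact_mono)
  also have "\<dots> \<le> real N ^ j * fact b"
    using assms(5) by (rule fact_add_le_power_mult_fact)
  finally have "fact b' / (real N ^ j * fact a') \<le> real N ^ j * fact b / (real N ^ j * fact a')"
    by (rule divide_right_mono) simp
  also have "\<dots> \<le> real N ^ j * fact b / (real N ^ j * fact (a - 1))"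
    using assms(3) \<open>0 < real N ^ j\<close> by (intro divide_left_mono mult_left_mono fact_mono) auto
  also have "\<dots> = (\<Prod>k\<in>{a..b}. real k)"
    using assms(1,2) \<open>0 < real N ^ j\<close> by (simp add: prod_atLeastAtMost_eq_fact_div)
  finally show ?thesis .
qed

lemma prod_abs_diff_progression_above:
  fixes c :: int and g a b d :: nat
  assumes "0 < g" "d < a"
  shows "(\<Prod>y\<in>(\<lambda>q. c + int g * int q) ` {a..b}. real_of_int \<bar>c + int g * int d - y\<bar>)
    = real g ^ (b + 1 - a) * (\<Prod>k\<in>{a - d..b - d}. real k)"
proof -
  have "(\<Prod>y\<in>(\<lambda>q. c + int g * int q) ` {a..b}. real_of_int \<bar>c + int g * int d - y\<bar>)
      = (\<Prod>q\<in>{a..b}. real g * real (q - d))"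
    using assms by (subst prod.reindex) (auto simp: inj_on_def abs_mult of_nat_diff
        simp flip: right_diff_distrib intro!: prod.cong)
  also have "(\<Prod>q\<in>{a..b}. real (q - d)) = (\<Prod>k\<in>{a - d..b - d}. real k)"
    using assms(2) by (intro prod.reindex_bij_witness[where i = "\<lambda>k. k + d" and j = "\<lambda>q. q - d"]) auto
  ultimately show ?thesis
    by (simp add: prod.distrib)
qed

lemma prod_abs_diff_progression_below:
  fixes c :: int and g a b d :: nat
  assumes "0 < g" "b < d"
  shows "(\<Prod>y\<in>(\<lambda>q. c + int g * int q) ` {a..b}. real_of_int \<bar>c + int g * int d - y\<bar>)
    = real g ^ (b + 1 - a) * (\<Prod>k\<in>{d - b..d - a}. real k)"
proof -
  have "(\<Prod>y\<in>(\<lambda>q. c + int g * int q) ` {a..b}. real_of_int \<bar>c + int g * int d - y\<bar>)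
      = (\<Prod>q\<in>{a..b}. real g * real (d - q))"
    using assms by (subst prod.reindex) (auto simp: inj_on_def abs_mult of_nat_diff
        simp flip: right_diff_distrib intro!: prod.cong)
  also have "(\<Prod>q\<in>{a..b}. real (d - q)) = (\<Prod>k\<in>{d - b..d - a}. real k)"
    using assms(2) by (intro prod.reindex_bij_witness[where i = "\<lambda>k. d - k" and j = "\<lambda>q. d - q"]) auto
  ultimately show ?thesis
    by (simp add: prod.distrib)
qed

lemma prod_abs_diff_interval_above:
  fixes a b d :: nat
  assumes "d < a"
  shows "(\<Prod>y\<in>{int a..int b}. real_of_int \<bar>int d - y\<bar>) = (\<Prod>k\<in>{a - d..b - d}. real k)"
  using prod_abs_diff_progression_above[of 1 d a 0 b] assms by (simp add: image_int_atLeastAtMost)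

lemma prod_abs_diff_interval_below:
  fixes a b d :: nat
  assumes "b < d"
  shows "(\<Prod>y\<in>{int a..int b}. real_of_int \<bar>int d - y\<bar>) = (\<Prod>k\<in>{d - b..d - a}. real k)"
  using prod_abs_diff_progression_below[of 1 b d 0 a] assms by (simp add: image_int_atLeastAtMost)

section \<open>Node weights along an arithmetic progression\<close>

lemma power_add_le_weighted:
  fixes u v \<mu> :: real
  assumes "0 \<le> u" "0 \<le> v" "0 < \<mu>" "\<mu> < 1"
  shows "(u + v) ^ m \<le> (u / \<mu>) ^ m + (v / (1 - \<mu>)) ^ m"
proof -
  define w where "w = max (u / \<mu>) (v / (1 - \<mu>))"
  have "u + v = \<mu> * (u / \<mu>) + (1 - \<mu>) * (v / (1 - \<mu>))"
    using assms by simp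
  also have "\<dots> \<le> \<mu> * w + (1 - \<mu>) * w"
    using assms by (intro add_mono mult_left_mono) (auto simp: w_def)
  also have "\<dots> = w"
    by (simp add: algebra_simps)
  finally have "(u + v) ^ m \<le> w ^ m"
    using assms by (intro power_mono) auto
  also have "\<dots> \<le> (u / \<mu>) ^ m + (v / (1 - \<mu>)) ^ m"
    using assms by (auto simp: w_def max_def)
  finally show ?thesis .
qed

lemma sum_inverse_fact_mult_powr:
  fixes A B :: real
  assumes "0 < A" "0 < B" "0 < m"
  shows "(\<Sum>p\<le>m. 1 / (fact p * fact (m - p) * (A powr (real (m - p) / m) * B powr (real p / m))))
    = (1 / A powr (1 / m) + 1 / B powr (1 / m)) ^ m / fact m"
proof -
  define u where "u = 1 / A powr (1 / m)"
  define v where "v = 1 / B powr (1 / m)"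
  have root: "Y powr (real k / m) = (Y powr (1 / m)) ^ k" if "0 < Y" for Y :: real and k
    using that by (simp add: powr_powr flip: powr_realpow)
  have "(\<Sum>p\<le>m. 1 / (fact p * fact (m - p) * (A powr (real (m - p) / m) * B powr (real p / m))))
      = (\<Sum>p\<le>m. of_nat (m choose p) * v ^ p * u ^ (m - p)) / fact m"
    unfolding sum_divide_distrib
  proof (intro sum.cong refl)
    fix p assume "p \<in> {..m}"
    then show "1 / (fact p * fact (m - p) * (A powr (real (m - p) / m) * B powr (real p / m)))
        = of_nat (m choose p) * v ^ p * u ^ (m - p) / fact m"
      unfolding root[OF assms(1)] root[OF assms(2)]
      by (simp add: u_def v_def binomial_fact power_one_over field_simps)
  qed
  also have "\<dots> = (v + u) ^ m / fact m"
    by (simp add: binomial_ring)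
  finally show ?thesis
    by (simp add: u_def v_def add.commute)
qed

lemma node_weight_progression_le:
  fixes T :: "int set" and x0 :: int and g m p :: nat
  defines "B \<equiv> (\<lambda>q. x0 + int g * int q) ` {..m}"
  defines "YL \<equiv> \<Prod>y\<in>T-B. real_of_int \<bar>x0 - y\<bar>"
    and "YR \<equiv> \<Prod>y\<in>T-B. real_of_int \<bar>x0 + int g * int m - y\<bar>"
  assumes "finite T" "B \<subseteq> T" "0 < g" "0 < m" "p \<le> m"
    and outside: "\<And>y. y \<in> T - B \<Longrightarrow> y < x0 \<or> x0 + int g * int m < y"
  shows "node_weight T (x0 + int g * int p)
    \<le> 1 / (real g ^ m * fact p * fact (m - p) * (YL powr (real (m - p) / m) * YR powr (real p / m)))"
proof -
  define x where "x = x0 + int g * int p"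
  have "x \<in> B" "finite B"
    using assms(8) by (auto simp: B_def x_def)
  then have "T - {x} = (B - {x}) \<union> (T - B)"
    using assms(5) by auto
  then have "(\<Prod>y\<in>T-{x}. real_of_int \<bar>x - y\<bar>) =
      (\<Prod>y\<in>B-{x}. real_of_int \<bar>x - y\<bar>) * (\<Prod>y\<in>T-B. real_of_int \<bar>x - y\<bar>)"
    using \<open>finite B\<close> assms(4) by (simp only:) (rule prod.union_disjoint; auto)
  moreover have "(\<Prod>y\<in>B-{x}. real_of_int \<bar>x - y\<bar>) = real g ^ m * fact p * fact (m - p)"
    unfolding B_def x_def using assms(6,8) by (rule prod_abs_diff_progression)
  moreover have "YL powr (real (m - p) / m) * YR powr (real p / m) \<le> (\<Prod>y\<in>T-B. real_of_int \<bar>x - y\<bar>)"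
    unfolding YL_def YR_def x_def using assms(7,8) outside by (rule prod_abs_diff_outside_progression_ge)
  moreover have "0 < YL" "0 < YR"
    unfolding YL_def YR_def using prod_abs_diff_outside_pos[of x0 "x0 + int g * int m" "T - B"] outside by auto
  then have "0 < YL powr (real (m - p) / m) * YR powr (real p / m)"
    by simp
  ultimately show ?thesis
    unfolding node_weight_def x_def[symmetric] using assms(6)
    by (intro frac_le) (auto intro!: mult_left_mono mult_pos_pos)
qed

lemma sum_node_weight_progression_le:
  fixes T :: "int set" and x0 :: int and g m :: nat and \<mu> :: real
  defines "B \<equiv> (\<lambda>q. x0 + int g * int q) ` {..m}"
  defines "YL \<equiv> \<Prod>y\<in>T-B. real_of_int \<bar>x0 - y\<bar>"
    and "YR \<equiv> \<Prod>y\<in>T-B. real_of_int \<bar>x0 + int g * int m - y\<bar>"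
  assumes "finite T" "B \<subseteq> T" "0 < g" "0 < m" "0 < \<mu>" "\<mu> < 1"
    and outside: "\<And>y. y \<in> T - B \<Longrightarrow> y < x0 \<or> x0 + int g * int m < y"
  shows "(\<Sum>x\<in>B. node_weight T x) \<le> ((1 / \<mu>) ^ m / YL + (1 / (1 - \<mu>)) ^ m / YR) / (real g ^ m * fact m)"
proof -
  have YL: "0 < YL" and YR: "0 < YR"
    unfolding YL_def YR_def using prod_abs_diff_outside_pos[of x0 "x0 + int g * int m" "T - B"] outside by auto
  define u where "u = 1 / YL powr (1 / m)"
  define v where "v = 1 / YR powr (1 / m)"
  have "u ^ m = 1 / YL" "v ^ m = 1 / YR"
    using YL YR assms(7) by (simp_all add: u_def v_def power_one_over powr_powr flip: powr_realpow)
  have "(\<Sum>x\<in>B. node_weight T x) = (\<Sum>p\<le>m. node_weight T (x0 + int g * int p))"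
    unfolding B_def using assms(6) by (subst sum.reindex) (auto simp: inj_on_def)
  also have "\<dots> \<le> (\<Sum>p\<le>m. 1 / (real g ^ m * fact p * fact (m - p) *
      (YL powr (real (m - p) / m) * YR powr (real p / m))))"
  proof (rule sum_mono)
    fix p assume "p \<in> {..m}"
    then show "node_weight T (x0 + int g * int p) \<le> 1 / (real g ^ m * fact p * fact (m - p) *
        (YL powr (real (m - p) / m) * YR powr (real p / m)))"
      unfolding YL_def YR_def B_def using assms(4-7) outside
      by (intro node_weight_progression_le) (auto simp: B_def)
  qed
  also have "\<dots> = (\<Sum>p\<le>m. 1 / (fact p * fact (m - p) *
      (YL powr (real (m - p) / m) * YR powr (real p / m)))) / real g ^ m"
    unfolding sum_divide_distrib by (simp add: divide_divide_eq_left ac_simps)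
  also have "\<dots> = (u + v) ^ m / (real g ^ m * fact m)"
    unfolding sum_inverse_fact_mult_powr[OF YL YR assms(7)] by (simp add: u_def v_def)
  also have "\<dots> \<le> ((u / \<mu>) ^ m + (v / (1 - \<mu>)) ^ m) / (real g ^ m * fact m)"
    using assms(8,9) by (intro divide_right_mono power_add_le_weighted) (auto simp: u_def v_def)
  also have "\<dots> = ((1 / \<mu>) ^ m / YL + (1 / (1 - \<mu>)) ^ m / YR) / (real g ^ m * fact m)"
    using \<open>u ^ m = 1 / YL\<close> \<open>v ^ m = 1 / YR\<close> by (simp add: power_divide mult.commute)
  finally show ?thesis .
qed

section \<open>Factorials\<close>

lemma power_div_fact_le_exp:
  fixes x :: real
  assumes "0 \<le> x"
  shows "x ^ n / fact n \<le> exp x"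
proof -
  have sums: "(\<lambda>i. x ^ i /\<^sub>R fact i) sums exp x"
    by (rule exp_converges)
  have "(\<Sum>i\<in>{n}. x ^ i /\<^sub>R fact i) \<le> (\<Sum>i. x ^ i /\<^sub>R fact i)"
    using sums assms by (intro sum_le_suminf) (auto simp: sums_iff)
  then show ?thesis
    using sums by (simp add: sums_iff divide_inverse mult.commute)
qed

lemma fact_ge_power_div_exp: "real k ^ k / exp (real k) \<le> fact k"
  using power_div_fact_le_exp[of "real k" k] by (simp add: field_simps)

lemma fact_le_power_div_exp:
  assumes "1 \<le> k"
  shows "fact k \<le> exp 1 * real k ^ (k + 1) / exp (real k)"
  using assms
proof (induction k rule: dec_induct)
  case (step n)
  have "exp 1 * (real n / real (n + 1)) ^ (n + 1) = exp 1 * (1 + (-1) / real (n + 1)) ^ (n + 1)"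
    by (simp add: field_simps)
  also have "\<dots> \<le> exp 1 * exp (-1)"
    by (intro mult_left_mono exp_ge_one_plus_x_over_n_power_n) auto
  finally have "exp 1 * real n ^ (n + 1) / real (n + 1) ^ (n + 1) \<le> 1"
    by (simp add: power_divide exp_minus)
  then have "exp 1 * real n ^ (n + 1) \<le> real (n + 1) ^ (n + 1)"
    by (simp add: divide_le_eq)
  have "fact (Suc n) = real (n + 1) * fact n"
    by (simp add: fact_Suc)
  also have "\<dots> \<le> real (n + 1) * (exp 1 * real n ^ (n + 1) / exp (real n))"
    using step.IH by (rule mult_left_mono) simp
  also have "\<dots> \<le> real (n + 1) * real (n + 1) ^ (n + 1) / exp (real n)"
    using \<open>exp 1 * real n ^ (n + 1) \<le> real (n + 1) ^ (n + 1)\<close>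
    by (simp add: divide_right_mono mult_left_mono)
  also have "\<dots> = exp 1 * real (Suc n) ^ (Suc n + 1) / exp (real (Suc n))"
    by (simp add: exp_add)
  finally show ?case .
qed simp

lemma power_self_div_exp_mult:
  "real (a * M) ^ (a * M) / exp (real (a * M)) = (real a ^ a) ^ M * (real M ^ M / exp (real M)) ^ a"
proof -
  have "real (a * M) ^ (a * M) = (real a ^ a) ^ M * (real M ^ M) ^ a"
    by (simp add: power_mult_distrib flip: power_mult) (simp add: mult.commute)
  moreover have "exp (real (a * M)) = exp (real M) ^ a"
    by (simp add: mult.commute flip: exp_of_nat_mult)
  ultimately show ?thesis
    by (simp add: power_divide)
qed

lemma prod_list_fact_mult_le:
  assumes "\<forall>a\<in>set as. 0 < a" "0 < M"
  shows "(\<Prod>a\<leftarrow>as. fact (a * M)) \<le> (exp 1 * real M) ^ length as * (\<Prod>a\<leftarrow>as. real a)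
    * (\<Prod>a\<leftarrow>as. real a ^ a) ^ M * (real M ^ M / exp (real M)) ^ sum_list as"
  using assms(1)
proof (induction as)
  case (Cons a as)
  have "fact (a * M) \<le> exp 1 * real (a * M) * (real (a * M) ^ (a * M) / exp (real (a * M)))"
    using fact_le_power_div_exp[of "a * M"] Cons.prems assms(2) by (simp add: field_simps)
  also have "\<dots> = exp 1 * real (a * M) * ((real a ^ a) ^ M * (real M ^ M / exp (real M)) ^ a)"
    by (simp only: power_self_div_exp_mult)
  finally have "fact (a * M) * (\<Prod>a\<leftarrow>as. fact (a * M)) \<le> (exp 1 * real (a * M) * ((real a ^ a) ^ M
      * (real M ^ M / exp (real M)) ^ a)) * ((exp 1 * real M) ^ length as * (\<Prod>a\<leftarrow>as. real a)
      * (\<Prod>a\<leftarrow>as. real a ^ a) ^ M * (real M ^ M / exp (real M)) ^ sum_list as)"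
    using Cons by (intro mult_mono) (auto intro!: prod_list_nonneg)
  then show ?case
    by (simp add: power_add power_mult_distrib algebra_simps)
qed simp

lemma prod_list_fact_mult_ge:
  "(\<Prod>b\<leftarrow>bs. real b ^ b) ^ M * (real M ^ M / exp (real M)) ^ sum_list bs \<le> (\<Prod>b\<leftarrow>bs. fact (b * M))"
proof (induction bs)
  case (Cons b bs)
  have "(real b ^ b) ^ M * (real M ^ M / exp (real M)) ^ b \<le> fact (b * M)"
    using fact_ge_power_div_exp[of "b * M"] unfolding power_self_div_exp_mult .
  with Cons have "(real b ^ b) ^ M * (real M ^ M / exp (real M)) ^ b *
      ((\<Prod>b\<leftarrow>bs. real b ^ b) ^ M * (real M ^ M / exp (real M)) ^ sum_list bs)
      \<le> fact (b * M) * (\<Prod>b\<leftarrow>bs. fact (b * M))"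
    by (intro mult_mono) (auto intro!: mult_nonneg_nonneg zero_le_power prod_list_nonneg)
  then show ?case
    by (simp add: power_add power_mult_distrib algebra_simps)
qed simp

lemma prod_list_power_self_pos: "0 < (\<Prod>b\<leftarrow>bs. real b ^ b)"
proof (induction bs)
  case (Cons b bs)
  have "0 < real b ^ b"
    by (cases b) auto
  with Cons show ?case
    by simp
qed simp

lemma prod_list_fact_ratio_le:
  assumes "\<forall>a\<in>set as. 0 < a" "sum_list as = sum_list bs" "0 < M"
  shows "(\<Prod>a\<leftarrow>as. fact (a * M)) / (\<Prod>b\<leftarrow>bs. fact (b * M))
    \<le> exp 1 ^ length as * (\<Prod>a\<leftarrow>as. real a) * real M ^ length as
      * ((\<Prod>a\<leftarrow>as. real a ^ a) / (\<Prod>b\<leftarrow>bs. real b ^ b)) ^ M"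
proof -
  define X where "X = real M ^ M / exp (real M)"
  have "0 < X"
    using assms(3) by (simp add: X_def)
  have "0 < (\<Prod>b\<leftarrow>bs. real b ^ b)"
    by (rule prod_list_power_self_pos)
  then have "(\<Prod>a\<leftarrow>as. fact (a * M)) / (\<Prod>b\<leftarrow>bs. fact (b * M))
      \<le> ((exp 1 * real M) ^ length as * (\<Prod>a\<leftarrow>as. real a) * (\<Prod>a\<leftarrow>as. real a ^ a) ^ M * X ^ sum_list as)
        / ((\<Prod>b\<leftarrow>bs. real b ^ b) ^ M * X ^ sum_list bs)"
    using prod_list_fact_mult_le[OF assms(1,3)] prod_list_fact_mult_ge[of bs M] \<open>0 < X\<close>
    by (intro frac_le) (auto simp: X_def intro!: mult_nonneg_nonneg zero_le_power prod_list_nonneg)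
  also have "\<dots> = exp 1 ^ length as * (\<Prod>a\<leftarrow>as. real a) * real M ^ length as
      * ((\<Prod>a\<leftarrow>as. real a ^ a) / (\<Prod>b\<leftarrow>bs. real b ^ b)) ^ M"
    using \<open>0 < X\<close> \<open>0 < (\<Prod>b\<leftarrow>bs. real b ^ b)\<close> assms(2) by (simp add: power_mult_distrib power_divide)
  finally show ?thesis .
qed

lemma fact_ratio_geometric_tendsto_zero:
  fixes as bs :: "nat list" and r :: real
  assumes "\<forall>a\<in>set as. 0 < a" "sum_list as = sum_list bs" "0 < r"
    and ratio: "r * (\<Prod>a\<leftarrow>as. real a ^ a) / (\<Prod>b\<leftarrow>bs. real b ^ b) < 1"
  shows "(\<lambda>M. real M ^ k * ((\<Prod>a\<leftarrow>as. fact (a * M)) / (\<Prod>b\<leftarrow>bs. fact (b * M))) * r ^ M) \<longlonglongrightarrow> 0"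
proof -
  define C where "C = exp 1 ^ length as * (\<Prod>a\<leftarrow>as. real a)"
  define \<rho> where "\<rho> = r * (\<Prod>a\<leftarrow>as. real a ^ a) / (\<Prod>b\<leftarrow>bs. real b ^ b)"
  have "0 < \<rho>" "\<rho> < 1"
    using assms(3) ratio prod_list_power_self_pos[of as] prod_list_power_self_pos[of bs] by (simp_all add: \<rho>_def)
  then have "(\<lambda>M. C * real M ^ (k + length as) * \<rho> ^ M) \<longlonglongrightarrow> 0"
    by real_asymp
  then show ?thesis
  proof (rule tendsto_sandwich[rotated 3])
    show "\<forall>\<^sub>F M in sequentially. 0 \<le> real M ^ k * ((\<Prod>a\<leftarrow>as. fact (a * M)) / (\<Prod>b\<leftarrow>bs. fact (b * M))) * r ^ M"
      using assms(3) by (intro always_eventually allI mult_nonneg_nonneg divide_nonneg_nonneg)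
        (auto intro!: prod_list_nonneg)
    show "\<forall>\<^sub>F M in sequentially. real M ^ k * ((\<Prod>a\<leftarrow>as. fact (a * M)) / (\<Prod>b\<leftarrow>bs. fact (b * M))) * r ^ M
        \<le> C * real M ^ (k + length as) * \<rho> ^ M"
      using eventually_gt_at_top[of 0]
    proof eventually_elim
      case (elim M)
      then have "real M ^ k * ((\<Prod>a\<leftarrow>as. fact (a * M)) / (\<Prod>b\<leftarrow>bs. fact (b * M))) * r ^ M
          \<le> real M ^ k * (C * real M ^ length as * ((\<Prod>a\<leftarrow>as. real a ^ a) / (\<Prod>b\<leftarrow>bs. real b ^ b)) ^ M) * r ^ M"
        using prod_list_fact_ratio_le[OF assms(1,2) elim] assms(3)
        by (intro mult_right_mono mult_left_mono) (auto simp: C_def)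
      also have "\<dots> = C * real M ^ (k + length as) * \<rho> ^ M"
        by (simp add: \<rho>_def power_add power_mult_distrib power_divide)
      finally show ?case .
    qed
  qed simp
qed

section \<open>The node configuration\<close>

(* 42 M + 1 nodes spanning 78 M: the ratio 78 / 42 = 13 / 7 is the constant obtained. *)
definition spread_nodes :: "nat \<Rightarrow> int set" where
  "spread_nodes M = {x. 0 \<le> x \<and> x \<le> 78 * int M \<and> (x \<le> 12 * int M \<or> 66 * int M \<le> x \<or> 3 dvd x)}"

lemma image_mult_atLeastAtMost:
  assumes "0 < g"
  shows "(\<lambda>q. int g * int q) ` {a..b} = {x. int g * int a \<le> x \<and> x \<le> int g * int b \<and> int g dvd x}"
proof (intro set_eqI iffI)
  fix x assume "x \<in> {x. int g * int a \<le> x \<and> x \<le> int g * int b \<and> int g dvd x}"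
  then obtain k where "x = int g * k" "int a \<le> k" "k \<le> int b"
    using assms by (auto elim!: dvdE simp: mult_le_cancel_left_pos)
  then show "x \<in> (\<lambda>q. int g * int q) ` {a..b}"
    by (intro image_eqI[where x = "nat k"]) auto
qed (use assms in auto)

lemma spread_nodes_subset: "spread_nodes M \<subseteq> {0..78 * int M}"
  by (auto simp: spread_nodes_def)

lemma finite_spread_nodes: "finite (spread_nodes M)"
  using spread_nodes_subset by (rule finite_subset) simp

lemma spread_nodes_reflect: "x \<in> spread_nodes M \<Longrightarrow> 78 * int M - x \<in> spread_nodes M"
  by (auto simp: spread_nodes_def)

lemma spread_nodes_lower_half:
  "{x \<in> spread_nodes M. 2 * x \<le> 78 * int M} = {0..12 * int M} \<union> (\<lambda>q. 3 * int q) ` {4 * M + 1..13 * M}"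
  by (auto simp: spread_nodes_def image_mult_atLeastAtMost[where g = 3, simplified])

lemma spread_nodes_diff_dense:
  assumes "1 \<le> M"
  shows "spread_nodes M - {0..12 * int M} = (\<lambda>q. 3 * int q) ` {4 * M + 1..22 * M - 1} \<union> {66 * int M..78 * int M}"
  using assms by (auto simp: spread_nodes_def image_mult_atLeastAtMost[where g = 3, simplified])

lemma spread_nodes_diff_sparse:
  assumes "1 \<le> M"
  shows "spread_nodes M - (\<lambda>q. 3 * int q) ` {4 * M + 1..13 * M}
    = {0..12 * int M} \<union> (\<lambda>q. 3 * int q) ` {13 * M + 1..22 * M - 1} \<union> {66 * int M..78 * int M}"
  using assms by (auto simp: spread_nodes_def image_mult_atLeastAtMost[where g = 3, simplified])

lemma card_spread_nodes:
  assumes "1 \<le> M"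
  shows "card (spread_nodes M) = 42 * M + 1"
proof -
  define S where "S = (\<lambda>q. 3 * int q) ` {4 * M + 1..22 * M - 1}"
  have dense: "{0..12 * int M} \<subseteq> spread_nodes M"
    by (auto simp: spread_nodes_def)
  have "S \<inter> {66 * int M..78 * int M} = {}"
    by (auto simp: S_def)
  then have "card (spread_nodes M - {0..12 * int M}) = card S + card {66 * int M..78 * int M}"
    unfolding spread_nodes_diff_dense[OF assms] S_def[symmetric] by (simp add: card_Un_disjoint S_def)
  moreover have "card S = 18 * M - 1"
    by (simp add: S_def card_image inj_on_def)
  moreover have "card (spread_nodes M) = card {0..12 * int M} + card (spread_nodes M - {0..12 * int M})"
    using card_mono[OF finite_spread_nodes dense] card_Diff_subset[OF _ dense] by simp
  ultimately show ?thesis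
    using assms by simp
qed

lemma prod_spread_nodes_diff_dense:
  assumes "1 \<le> M"
  shows "(\<Prod>y\<in>spread_nodes M - {0..12 * int M}. f y)
    = (\<Prod>y\<in>(\<lambda>q. 3 * int q) ` {4 * M + 1..22 * M - 1}. f y) * (\<Prod>y\<in>{66 * int M..78 * int M}. f y)"
  unfolding spread_nodes_diff_dense[OF assms] by (rule prod.union_disjoint) auto

lemma prod_spread_nodes_diff_sparse:
  assumes "1 \<le> M"
  shows "(\<Prod>y\<in>spread_nodes M - (\<lambda>q. 3 * int q) ` {4 * M + 1..13 * M}. f y)
    = (\<Prod>y\<in>{0..12 * int M}. f y) * (\<Prod>y\<in>(\<lambda>q. 3 * int q) ` {13 * M + 1..22 * M - 1}. f y)
      * (\<Prod>y\<in>{66 * int M..78 * int M}. f y)"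
proof -
  let ?L = "{0..12 * int M}" and ?S = "(\<lambda>q. 3 * int q) ` {13 * M + 1..22 * M - 1}"
    and ?R = "{66 * int M..78 * int M}"
  have "(\<Prod>y\<in>?L \<union> ?S \<union> ?R. f y) = (\<Prod>y\<in>?L \<union> ?S. f y) * (\<Prod>y\<in>?R. f y)"
    by (rule prod.union_disjoint) (use assms in auto)
  also have "(\<Prod>y\<in>?L \<union> ?S. f y) = (\<Prod>y\<in>?L. f y) * (\<Prod>y\<in>?S. f y)"
    by (rule prod.union_disjoint) auto
  finally show ?thesis
    unfolding spread_nodes_diff_sparse[OF assms] .
qed

lemma prod_dist_dense_left_ge:
  assumes "1 \<le> M"
  shows "3 ^ (18 * M - 1) * (fact (22 * M) / (real (78 * M) * fact (4 * M))) * (fact (78 * M) / fact (66 * M))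
    \<le> (\<Prod>y\<in>spread_nodes M - {0..12 * int M}. real_of_int \<bar>0 - y\<bar>)"
proof -
  have sparse: "(\<Prod>y\<in>(\<lambda>q. 3 * int q) ` {4 * M + 1..22 * M - 1}. real_of_int \<bar>0 - y\<bar>)
      = 3 ^ (18 * M - 1) * (\<Prod>k\<in>{4 * M + 1..22 * M - 1}. real k)"
    using prod_abs_diff_progression_above[of 3 0 "4 * M + 1" 0 "22 * M - 1"] assms by simp
  have dense: "(\<Prod>y\<in>{66 * int M..78 * int M}. real_of_int \<bar>0 - y\<bar>) = (\<Prod>k\<in>{66 * M..78 * M}. real k)"
    using prod_abs_diff_interval_above[of 0 "66 * M" "78 * M"] assms by simp
  have eq: "(\<Prod>y\<in>spread_nodes M - {0..12 * int M}. real_of_int \<bar>0 - y\<bar>)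
      = 3 ^ (18 * M - 1) * (\<Prod>k\<in>{4 * M + 1..22 * M - 1}. real k) * (\<Prod>k\<in>{66 * M..78 * M}. real k)"
    unfolding prod_spread_nodes_diff_dense[OF assms] sparse dense ..
  have "fact (22 * M) / (real (78 * M) * fact (4 * M)) \<le> (\<Prod>k\<in>{4 * M + 1..22 * M - 1}. real k)"
    using prod_atLeastAtMost_ge_fact_div[of "4 * M + 1" "22 * M - 1" "4 * M" "22 * M" 1 "78 * M"] assms
    by simp
  moreover have "fact (78 * M) / fact (66 * M) \<le> (\<Prod>k\<in>{66 * M..78 * M}. real k)"
    using prod_atLeastAtMost_ge_fact_div[of "66 * M" "78 * M" "66 * M" "78 * M" 0 "78 * M"] assms
    by simp
  ultimately show ?thesis
    unfolding eq by (intro mult_mono mult_left_mono) (auto intro!: mult_nonneg_nonneg prod_nonneg)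
qed

lemma prod_dist_dense_right_ge:
  assumes "1 \<le> M"
  shows "3 ^ (18 * M - 1) * (fact (18 * M) / real (78 * M)) * (fact (66 * M) / fact (54 * M))
    \<le> (\<Prod>y\<in>spread_nodes M - {0..12 * int M}. real_of_int \<bar>12 * int M - y\<bar>)"
proof -
  have sparse: "(\<Prod>y\<in>(\<lambda>q. 3 * int q) ` {4 * M + 1..22 * M - 1}. real_of_int \<bar>12 * int M - y\<bar>)
      = 3 ^ (18 * M - 1) * (\<Prod>k\<in>{1..18 * M - 1}. real k)"
    using prod_abs_diff_progression_above[of 3 "4 * M" "4 * M + 1" 0 "22 * M - 1"] assms by simp
  have dense: "(\<Prod>y\<in>{66 * int M..78 * int M}. real_of_int \<bar>12 * int M - y\<bar>) = (\<Prod>k\<in>{54 * M..66 * M}. real k)"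
    using prod_abs_diff_interval_above[of "12 * M" "66 * M" "78 * M"] assms by simp
  have eq: "(\<Prod>y\<in>spread_nodes M - {0..12 * int M}. real_of_int \<bar>12 * int M - y\<bar>)
      = 3 ^ (18 * M - 1) * (\<Prod>k\<in>{1..18 * M - 1}. real k) * (\<Prod>k\<in>{54 * M..66 * M}. real k)"
    unfolding prod_spread_nodes_diff_dense[OF assms] sparse dense ..
  have "fact (18 * M) / real (78 * M) \<le> (\<Prod>k\<in>{1..18 * M - 1}. real k)"
    using prod_atLeastAtMost_ge_fact_div[of 1 "18 * M - 1" 0 "18 * M" 1 "78 * M"] assms by simp
  moreover have "fact (66 * M) / fact (54 * M) \<le> (\<Prod>k\<in>{54 * M..66 * M}. real k)"
    using prod_atLeastAtMost_ge_fact_div[of "54 * M" "66 * M" "54 * M" "66 * M" 0 "78 * M"] assms by simp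
  ultimately show ?thesis
    unfolding eq by (intro mult_mono mult_left_mono) (auto intro!: mult_nonneg_nonneg prod_nonneg)
qed

lemma prod_dist_sparse_left_ge:
  assumes "1 \<le> M"
  shows "fact (12 * M) / 2 * (3 ^ (9 * M - 1) * (fact (18 * M) / (real (78 * M) ^ 2 * fact (9 * M))))
      * (fact (66 * M) / (real (78 * M) ^ 3 * fact (54 * M)))
    \<le> (\<Prod>y\<in>spread_nodes M - (\<lambda>q. 3 * int q) ` {4 * M + 1..13 * M}. real_of_int \<bar>12 * int M + 3 - y\<bar>)"
proof -
  have left: "(\<Prod>y\<in>{0..12 * int M}. real_of_int \<bar>12 * int M + 3 - y\<bar>) = (\<Prod>k\<in>{3..12 * M + 3}. real k)"
    using prod_abs_diff_interval_below[of "12 * M" "12 * M + 3" 0] by simp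
  have sparse: "(\<Prod>y\<in>(\<lambda>q. 3 * int q) ` {13 * M + 1..22 * M - 1}. real_of_int \<bar>12 * int M + 3 - y\<bar>)
      = 3 ^ (9 * M - 1) * (\<Prod>k\<in>{9 * M..18 * M - 2}. real k)"
    using prod_abs_diff_progression_above[of 3 "4 * M + 1" "13 * M + 1" 0 "22 * M - 1"] assms
    by (simp add: add.commute)
  have right: "(\<Prod>y\<in>{66 * int M..78 * int M}. real_of_int \<bar>12 * int M + 3 - y\<bar>)
      = (\<Prod>k\<in>{54 * M - 3..66 * M - 3}. real k)"
    using prod_abs_diff_interval_above[of "12 * M + 3" "66 * M" "78 * M"] assms by simp
  have eq: "(\<Prod>y\<in>spread_nodes M - (\<lambda>q. 3 * int q) ` {4 * M + 1..13 * M}. real_of_int \<bar>12 * int M + 3 - y\<bar>)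
      = (\<Prod>k\<in>{3..12 * M + 3}. real k) * (3 ^ (9 * M - 1) * (\<Prod>k\<in>{9 * M..18 * M - 2}. real k))
      * (\<Prod>k\<in>{54 * M - 3..66 * M - 3}. real k)"
    unfolding prod_spread_nodes_diff_sparse[OF assms] left sparse right ..
  have "fact (12 * M) / 2 \<le> (\<Prod>k\<in>{3..12 * M + 3}. real k)"
    using prod_atLeastAtMost_ge_fact_div[of 3 "12 * M + 3" 2 "12 * M" 0 "78 * M"] assms by simp
  moreover have "fact (18 * M) / (real (78 * M) ^ 2 * fact (9 * M)) \<le> (\<Prod>k\<in>{9 * M..18 * M - 2}. real k)"
    using prod_atLeastAtMost_ge_fact_div[of "9 * M" "18 * M - 2" "9 * M" "18 * M" 2 "78 * M"] assms by simp
  moreover have "fact (66 * M) / (real (78 * M) ^ 3 * fact (54 * M)) \<le> (\<Prod>k\<in>{54 * M - 3..66 * M - 3}. real k)"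
    using prod_atLeastAtMost_ge_fact_div[of "54 * M - 3" "66 * M - 3" "54 * M" "66 * M" 3 "78 * M"] assms
    by simp
  ultimately show ?thesis
    unfolding eq by (intro mult_mono mult_left_mono) (auto intro!: mult_nonneg_nonneg prod_nonneg)
qed

lemma prod_dist_sparse_right_ge:
  assumes "1 \<le> M"
  shows "fact (39 * M) / fact (27 * M) * (3 ^ (9 * M - 1) * (fact (9 * M) / real (78 * M)))
      * (fact (39 * M) / fact (27 * M))
    \<le> (\<Prod>y\<in>spread_nodes M - (\<lambda>q. 3 * int q) ` {4 * M + 1..13 * M}. real_of_int \<bar>39 * int M - y\<bar>)"
proof -
  have left: "(\<Prod>y\<in>{0..12 * int M}. real_of_int \<bar>39 * int M - y\<bar>) = (\<Prod>k\<in>{27 * M..39 * M}. real k)"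
    using prod_abs_diff_interval_below[of "12 * M" "39 * M" 0] assms by simp
  have sparse: "(\<Prod>y\<in>(\<lambda>q. 3 * int q) ` {13 * M + 1..22 * M - 1}. real_of_int \<bar>39 * int M - y\<bar>)
      = 3 ^ (9 * M - 1) * (\<Prod>k\<in>{1..9 * M - 1}. real k)"
    using prod_abs_diff_progression_above[of 3 "13 * M" "13 * M + 1" 0 "22 * M - 1"] assms by simp
  have right: "(\<Prod>y\<in>{66 * int M..78 * int M}. real_of_int \<bar>39 * int M - y\<bar>) = (\<Prod>k\<in>{27 * M..39 * M}. real k)"
    using prod_abs_diff_interval_above[of "39 * M" "66 * M" "78 * M"] assms by simp
  have eq: "(\<Prod>y\<in>spread_nodes M - (\<lambda>q. 3 * int q) ` {4 * M + 1..13 * M}. real_of_int \<bar>39 * int M - y\<bar>)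
      = (\<Prod>k\<in>{27 * M..39 * M}. real k) * (3 ^ (9 * M - 1) * (\<Prod>k\<in>{1..9 * M - 1}. real k))
      * (\<Prod>k\<in>{27 * M..39 * M}. real k)"
    unfolding prod_spread_nodes_diff_sparse[OF assms] left sparse right ..
  have "fact (39 * M) / fact (27 * M) \<le> (\<Prod>k\<in>{27 * M..39 * M}. real k)"
    using prod_atLeastAtMost_ge_fact_div[of "27 * M" "39 * M" "27 * M" "39 * M" 0 "78 * M"] assms by simp
  moreover have "fact (9 * M) / real (78 * M) \<le> (\<Prod>k\<in>{1..9 * M - 1}. real k)"
    using prod_atLeastAtMost_ge_fact_div[of 1 "9 * M - 1" 0 "9 * M" 1 "78 * M"] assms by simp
  ultimately show ?thesis
    unfolding eq by (intro mult_mono mult_left_mono) (auto intro!: mult_nonneg_nonneg prod_nonneg)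
qed

lemma sum_node_weight_dense_block_le:
  assumes "1 \<le> M"
  shows "(\<Sum>x\<in>{0..12 * int M}. node_weight (spread_nodes M) x)
    \<le> (4 ^ (12 * M) / (\<Prod>y\<in>spread_nodes M - {0..12 * int M}. real_of_int \<bar>0 - y\<bar>)
       + (4 / 3) ^ (12 * M) / (\<Prod>y\<in>spread_nodes M - {0..12 * int M}. real_of_int \<bar>12 * int M - y\<bar>))
      / fact (12 * M)"
proof -
  have block: "int ` {..12 * M} = {0..12 * int M}"
    by (simp add: atMost_atLeast0 image_int_atLeastAtMost)
  have outside: "y < 0 \<or> 12 * int M < y" if "y \<in> spread_nodes M - {0..12 * int M}" for y
    using that by (auto simp: spread_nodes_def)
  have "{0..12 * int M} \<subseteq> spread_nodes M"
    by (auto simp: spread_nodes_def)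
  have "(\<Sum>x\<in>(\<lambda>q. 0 + int 1 * int q) ` {..12 * M}. node_weight (spread_nodes M) x)
    \<le> ((1 / (1 / 4)) ^ (12 * M) / (\<Prod>y\<in>spread_nodes M - (\<lambda>q. 0 + int 1 * int q) ` {..12 * M}. real_of_int \<bar>0 - y\<bar>)
       + (1 / (1 - 1 / 4)) ^ (12 * M) / (\<Prod>y\<in>spread_nodes M - (\<lambda>q. 0 + int 1 * int q) ` {..12 * M}.
          real_of_int \<bar>0 + int 1 * int (12 * M) - y\<bar>)) / (real 1 ^ (12 * M) * fact (12 * M))"
    using assms outside \<open>{0..12 * int M} \<subseteq> spread_nodes M\<close> finite_spread_nodes
    by (intro sum_node_weight_progression_le) (auto simp: block)
  then show ?thesis
    by (simp add: block)
qed

lemma sum_node_weight_sparse_block_le: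
  assumes "1 \<le> M"
  shows "(\<Sum>x\<in>(\<lambda>q. 3 * int q) ` {4 * M + 1..13 * M}. node_weight (spread_nodes M) x)
    \<le> ((5 / 3) ^ (9 * M - 1) / (\<Prod>y\<in>spread_nodes M - (\<lambda>q. 3 * int q) ` {4 * M + 1..13 * M}.
          real_of_int \<bar>12 * int M + 3 - y\<bar>)
       + (5 / 2) ^ (9 * M - 1) / (\<Prod>y\<in>spread_nodes M - (\<lambda>q. 3 * int q) ` {4 * M + 1..13 * M}.
          real_of_int \<bar>39 * int M - y\<bar>))
      / (3 ^ (9 * M - 1) * fact (9 * M - 1))"
proof -
  have block: "(\<lambda>q. (12 * int M + 3) + int 3 * int q) ` {..9 * M - 1} = (\<lambda>q. 3 * int q) ` {4 * M + 1..13 * M}"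
  proof -
    have "{4 * M + 1..13 * M} = (\<lambda>q. q + (4 * M + 1)) ` {0..9 * M - 1}"
      using image_add_atLeastAtMost[of "4 * M + 1" 0 "9 * M - 1"] assms by (simp add: ac_simps)
    then have "{4 * M + 1..13 * M} = (\<lambda>q. q + (4 * M + 1)) ` {..9 * M - 1}"
      by (simp add: atMost_atLeast0)
    then show ?thesis
      by (simp add: image_image algebra_simps)
  qed
  have right_end: "12 * int M + 3 + int 3 * int (9 * M - 1) = 39 * int M"
    using assms by (simp add: of_nat_diff)
  have outside: "y < 12 * int M + 3 \<or> 39 * int M < y"
    if "y \<in> spread_nodes M - (\<lambda>q. 3 * int q) ` {4 * M + 1..13 * M}" for y
    using that unfolding spread_nodes_diff_sparse[OF assms] by auto
  have "(\<Sum>x\<in>(\<lambda>q. (12 * int M + 3) + int 3 * int q) ` {..9 * M - 1}. node_weight (spread_nodes M) x)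
    \<le> ((1 / (3 / 5)) ^ (9 * M - 1) / (\<Prod>y\<in>spread_nodes M - (\<lambda>q. (12 * int M + 3) + int 3 * int q) ` {..9 * M - 1}.
          real_of_int \<bar>(12 * int M + 3) - y\<bar>)
       + (1 / (1 - 3 / 5)) ^ (9 * M - 1) / (\<Prod>y\<in>spread_nodes M - (\<lambda>q. (12 * int M + 3) + int 3 * int q) ` {..9 * M - 1}.
          real_of_int \<bar>12 * int M + 3 + int 3 * int (9 * M - 1) - y\<bar>)) / (real 3 ^ (9 * M - 1) * fact (9 * M - 1))"
  proof (rule sum_node_weight_progression_le)
    show "(\<lambda>q. 12 * int M + 3 + int 3 * int q) ` {..9 * M - 1} \<subseteq> spread_nodes M"
      unfolding block by (auto simp: spread_nodes_def)
    show "y < 12 * int M + 3 \<or> 12 * int M + 3 + int 3 * int (9 * M - 1) < y"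
      if "y \<in> spread_nodes M - (\<lambda>q. 12 * int M + 3 + int 3 * int q) ` {..9 * M - 1}" for y
      using outside[of y] that unfolding block right_end .
  qed (use assms finite_spread_nodes in auto)
  then show ?thesis
    unfolding block right_end by simp
qed

lemma dense_left_term_le:
  assumes "1 \<le> M"
  shows "(78 * real M) ^ 42 * fact (42 * M)
      * (4 ^ (12 * M) / (\<Prod>y\<in>spread_nodes M - {0..12 * int M}. real_of_int \<bar>0 - y\<bar>) / fact (12 * M))
    \<le> 3 * 78 ^ 43 * (real M ^ 43 * ((\<Prod>a\<leftarrow>[42, 4, 66]. fact (a * M)) / (\<Prod>b\<leftarrow>[12, 22, 78]. fact (b * M)))
      * (4 ^ 12 / 3 ^ 18) ^ M)"
proof -
  define Y where "Y = 3 ^ (18 * M - 1) * (fact (22 * M) / (real (78 * M) * fact (4 * M))) * (fact (78 * M) / fact (66 * M))"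
  have "0 < Y"
    using assms by (simp add: Y_def)
  have three: "(3::real) ^ (18 * M - 1) = 3 ^ (18 * M) / 3"
    using assms by (cases "18 * M") auto
  have "(78 * real M) ^ 42 * fact (42 * M)
      * (4 ^ (12 * M) / (\<Prod>y\<in>spread_nodes M - {0..12 * int M}. real_of_int \<bar>0 - y\<bar>) / fact (12 * M))
    \<le> (78 * real M) ^ 42 * fact (42 * M) * (4 ^ (12 * M) / Y / fact (12 * M))"
    using prod_dist_dense_left_ge[OF assms] \<open>0 < Y\<close> unfolding Y_def[symmetric]
    by (intro mult_left_mono divide_right_mono divide_left_mono) auto
  also have "\<dots> = 3 * 78 ^ 43 * (real M ^ 43 * ((\<Prod>a\<leftarrow>[42, 4, 66]. fact (a * M)) / (\<Prod>b\<leftarrow>[12, 22, 78]. fact (b * M)))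
      * (4 ^ 12 / 3 ^ 18) ^ M)"
    using assms power_Suc[of "real M" 42] unfolding Y_def three power_mult
    by (simp add: field_simps power_mult_distrib)
  finally show ?thesis .
qed

lemma dense_right_term_le:
  assumes "1 \<le> M"
  shows "(78 * real M) ^ 42 * fact (42 * M)
      * ((4 / 3) ^ (12 * M) / (\<Prod>y\<in>spread_nodes M - {0..12 * int M}. real_of_int \<bar>12 * int M - y\<bar>) / fact (12 * M))
    \<le> 3 * 78 ^ 43 * (real M ^ 43 * ((\<Prod>a\<leftarrow>[42, 54]. fact (a * M)) / (\<Prod>b\<leftarrow>[12, 18, 66]. fact (b * M)))
      * (4 ^ 12 / 3 ^ 30) ^ M)"
proof -
  define Y where "Y = 3 ^ (18 * M - 1) * (fact (18 * M) / real (78 * M)) * (fact (66 * M) / fact (54 * M))"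
  have "0 < Y"
    using assms by (simp add: Y_def)
  have three: "(3::real) ^ (18 * M - 1) = 3 ^ (18 * M) / 3"
    using assms by (cases "18 * M") auto
  have "(78 * real M) ^ 42 * fact (42 * M)
      * ((4 / 3) ^ (12 * M) / (\<Prod>y\<in>spread_nodes M - {0..12 * int M}. real_of_int \<bar>12 * int M - y\<bar>) / fact (12 * M))
    \<le> (78 * real M) ^ 42 * fact (42 * M) * ((4 / 3) ^ (12 * M) / Y / fact (12 * M))"
    using prod_dist_dense_right_ge[OF assms] \<open>0 < Y\<close> unfolding Y_def[symmetric]
    by (intro mult_left_mono divide_right_mono divide_left_mono) auto
  also have "\<dots> = 3 * 78 ^ 43 * (real M ^ 43 * ((\<Prod>a\<leftarrow>[42, 54]. fact (a * M)) / (\<Prod>b\<leftarrow>[12, 18, 66]. fact (b * M)))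
      * (4 ^ 12 / 3 ^ 30) ^ M)"
    using assms power_Suc[of "real M" 42] unfolding Y_def three power_mult
    by (simp add: field_simps power_mult_distrib) (simp flip: power_mult_distrib)
  finally show ?thesis .
qed

lemma sparse_left_term_le:
  assumes "1 \<le> M"
  shows "(78 * real M) ^ 42 * fact (42 * M)
      * ((5 / 3) ^ (9 * M - 1) / (\<Prod>y\<in>spread_nodes M - (\<lambda>q. 3 * int q) ` {4 * M + 1..13 * M}.
          real_of_int \<bar>12 * int M + 3 - y\<bar>) / (3 ^ (9 * M - 1) * fact (9 * M - 1)))
    \<le> 486 / 5 * 78 ^ 47 * (real M ^ 48 * ((\<Prod>a\<leftarrow>[42, 54]. fact (a * M)) / (\<Prod>b\<leftarrow>[12, 18, 66]. fact (b * M)))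
      * (5 ^ 9 / 3 ^ 27) ^ M)"
proof -
  define Y where "Y = fact (12 * M) / 2 * (3 ^ (9 * M - 1) * (fact (18 * M) / (real (78 * M) ^ 2 * fact (9 * M))))
      * (fact (66 * M) / (real (78 * M) ^ 3 * fact (54 * M)))"
  have "0 < Y"
    using assms by (simp add: Y_def)
  have pred: "(x::real) ^ (9 * M - 1) = (x ^ 9) ^ M / x" if "x \<noteq> 0" for x
    using assms that by (cases "9 * M") (auto simp flip: power_mult)
  have fact_pred: "fact (9 * M - 1) = (fact (9 * M) / (9 * real M) :: real)"
    using assms fact_reduce[of "9 * M", where 'a = real] by simp
  have pred_base: "(5 / 3 :: real) ^ (9 * M - 1) = ((5 / 3) ^ 9) ^ M / (5 / 3)"
    by (rule pred) simp
  have pred_three: "(3 :: real) ^ (9 * M - 1) = (3 ^ 9) ^ M / 3"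
    by (rule pred) simp
  have "(78 * real M) ^ 42 * fact (42 * M)
      * ((5 / 3) ^ (9 * M - 1) / (\<Prod>y\<in>spread_nodes M - (\<lambda>q. 3 * int q) ` {4 * M + 1..13 * M}.
          real_of_int \<bar>12 * int M + 3 - y\<bar>) / (3 ^ (9 * M - 1) * fact (9 * M - 1)))
    \<le> (78 * real M) ^ 42 * fact (42 * M) * ((5 / 3) ^ (9 * M - 1) / Y / (3 ^ (9 * M - 1) * fact (9 * M - 1)))"
    using prod_dist_sparse_left_ge[OF assms] \<open>0 < Y\<close> unfolding Y_def[symmetric]
    by (intro mult_left_mono divide_right_mono divide_left_mono) auto
  also have "\<dots> = 486 / 5 * 78 ^ 47 * (real M ^ 48 * ((\<Prod>a\<leftarrow>[42, 54]. fact (a * M)) / (\<Prod>b\<leftarrow>[12, 18, 66]. fact (b * M)))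
      * (5 ^ 9 / 3 ^ 27) ^ M)"
    using assms power_Suc[of "real M" 47] unfolding Y_def pred_base pred_three fact_pred power_mult
    by (simp add: field_simps power_mult_distrib) (simp flip: power_mult_distrib)
  finally show ?thesis .
qed

lemma sparse_right_term_le:
  assumes "1 \<le> M"
  shows "(78 * real M) ^ 42 * fact (42 * M)
      * ((5 / 2) ^ (9 * M - 1) / (\<Prod>y\<in>spread_nodes M - (\<lambda>q. 3 * int q) ` {4 * M + 1..13 * M}.
          real_of_int \<bar>39 * int M - y\<bar>) / (3 ^ (9 * M - 1) * fact (9 * M - 1)))
    \<le> 162 / 5 * 78 ^ 43 * (real M ^ 44 * ((\<Prod>a\<leftarrow>[42, 27, 27]. fact (a * M)) / (\<Prod>b\<leftarrow>[9, 9, 39, 39]. fact (b * M)))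
      * (5 ^ 9 / (2 ^ 9 * 3 ^ 18)) ^ M)"
proof -
  define Y where "Y = fact (39 * M) / fact (27 * M) * (3 ^ (9 * M - 1) * (fact (9 * M) / real (78 * M)))
      * (fact (39 * M) / fact (27 * M))"
  have "0 < Y"
    using assms by (simp add: Y_def)
  have pred: "(x::real) ^ (9 * M - 1) = (x ^ 9) ^ M / x" if "x \<noteq> 0" for x
    using assms that by (cases "9 * M") (auto simp flip: power_mult)
  have fact_pred: "fact (9 * M - 1) = (fact (9 * M) / (9 * real M) :: real)"
    using assms fact_reduce[of "9 * M", where 'a = real] by simp
  have pred_base: "(5 / 2 :: real) ^ (9 * M - 1) = ((5 / 2) ^ 9) ^ M / (5 / 2)"
    by (rule pred) simp
  have pred_three: "(3 :: real) ^ (9 * M - 1) = (3 ^ 9) ^ M / 3"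
    by (rule pred) simp
  have "(78 * real M) ^ 42 * fact (42 * M)
      * ((5 / 2) ^ (9 * M - 1) / (\<Prod>y\<in>spread_nodes M - (\<lambda>q. 3 * int q) ` {4 * M + 1..13 * M}.
          real_of_int \<bar>39 * int M - y\<bar>) / (3 ^ (9 * M - 1) * fact (9 * M - 1)))
    \<le> (78 * real M) ^ 42 * fact (42 * M) * ((5 / 2) ^ (9 * M - 1) / Y / (3 ^ (9 * M - 1) * fact (9 * M - 1)))"
    using prod_dist_sparse_right_ge[OF assms] \<open>0 < Y\<close> unfolding Y_def[symmetric]
    by (intro mult_left_mono divide_right_mono divide_left_mono) auto
  also have "\<dots> = 162 / 5 * 78 ^ 43 * (real M ^ 44 * ((\<Prod>a\<leftarrow>[42, 27, 27]. fact (a * M)) / (\<Prod>b\<leftarrow>[9, 9, 39, 39]. fact (b * M)))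
      * (5 ^ 9 / (2 ^ 9 * 3 ^ 18)) ^ M)"
    using assms power_Suc[of "real M" 43] power_Suc[of "real M" 42] unfolding Y_def pred_base pred_three fact_pred power_mult
    by (simp add: field_simps power_mult_distrib) (simp flip: power_mult_distrib)
  finally show ?thesis .
qed

lemma sum_node_weight_spread_nodes_le:
  assumes "1 \<le> M"
  shows "(\<Sum>x\<in>spread_nodes M. node_weight (spread_nodes M) x)
    \<le> 2 * ((\<Sum>x\<in>{0..12 * int M}. node_weight (spread_nodes M) x)
      + (\<Sum>x\<in>(\<lambda>q. 3 * int q) ` {4 * M + 1..13 * M}. node_weight (spread_nodes M) x))"
proof -
  have "{0..12 * int M} \<inter> (\<lambda>q. 3 * int q) ` {4 * M + 1..13 * M} = {}"
    by auto
  then show ?thesis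
    using sum_node_weight_le_twice_lower_half[of "spread_nodes M" "78 * int M"]
    unfolding spread_nodes_lower_half by (simp add: finite_spread_nodes spread_nodes_reflect sum.union_disjoint)
qed

lemma eventually_spread_nodes_weight_small:
  "\<forall>\<^sub>F M in sequentially.
     (78 * real M) ^ 42 * fact (42 * M) * (\<Sum>x\<in>spread_nodes M. node_weight (spread_nodes M) x) \<le> 1 / 2"
proof -
  (* Besides positivity and equal sums, simp checks the exact rational inequalities
     r * prod a^a / prod b^b < 1 for the four geometric rates. *)
  have AL: "\<forall>\<^sub>F M in sequentially. 3 * 78 ^ 43 * (real M ^ 43 * ((\<Prod>a\<leftarrow>[42, 4, 66]. fact (a * M))
      / (\<Prod>b\<leftarrow>[12, 22, 78]. fact (b * M))) * (4 ^ 12 / 3 ^ 18) ^ M) < (1 / 16 :: real)"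
    by (rule order_tendstoD(2)[OF tendsto_mult_right_zero[OF fact_ratio_geometric_tendsto_zero]]) simp_all
  have AR: "\<forall>\<^sub>F M in sequentially. 3 * 78 ^ 43 * (real M ^ 43 * ((\<Prod>a\<leftarrow>[42, 54]. fact (a * M))
      / (\<Prod>b\<leftarrow>[12, 18, 66]. fact (b * M))) * (4 ^ 12 / 3 ^ 30) ^ M) < (1 / 16 :: real)"
    by (rule order_tendstoD(2)[OF tendsto_mult_right_zero[OF fact_ratio_geometric_tendsto_zero]]) simp_all
  have BL: "\<forall>\<^sub>F M in sequentially. 486 / 5 * 78 ^ 47 * (real M ^ 48 * ((\<Prod>a\<leftarrow>[42, 54]. fact (a * M))
      / (\<Prod>b\<leftarrow>[12, 18, 66]. fact (b * M))) * (5 ^ 9 / 3 ^ 27) ^ M) < (1 / 16 :: real)"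
    by (rule order_tendstoD(2)[OF tendsto_mult_right_zero[OF fact_ratio_geometric_tendsto_zero]]) simp_all
  have BR: "\<forall>\<^sub>F M in sequentially. 162 / 5 * 78 ^ 43 * (real M ^ 44 * ((\<Prod>a\<leftarrow>[42, 27, 27]. fact (a * M))
      / (\<Prod>b\<leftarrow>[9, 9, 39, 39]. fact (b * M))) * (5 ^ 9 / (2 ^ 9 * 3 ^ 18)) ^ M) < (1 / 16 :: real)"
    by (rule order_tendstoD(2)[OF tendsto_mult_right_zero[OF fact_ratio_geometric_tendsto_zero]]) simp_all
  show ?thesis
    using AL AR BL BR eventually_ge_at_top[of 1]
  proof eventually_elim
    case (elim M)
    define W where "W = (78 * real M) ^ 42 * fact (42 * M)"
    have "0 \<le> W"
      by (simp add: W_def)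
    have distrib: "W * ((x + y) / z) = W * (x / z) + W * (y / z)" for x y z :: real
      by (simp add: add_divide_distrib distrib_left)
    note dense = mult_left_mono[OF sum_node_weight_dense_block_le[OF elim(5)] \<open>0 \<le> W\<close>, unfolded distrib]
    note sparse = mult_left_mono[OF sum_node_weight_sparse_block_le[OF elim(5)] \<open>0 \<le> W\<close>, unfolded distrib]
    note total = mult_left_mono[OF sum_node_weight_spread_nodes_le[OF elim(5)] \<open>0 \<le> W\<close>]
    note terms = dense_left_term_le[OF elim(5), folded W_def] dense_right_term_le[OF elim(5), folded W_def]
      sparse_left_term_le[OF elim(5), folded W_def] sparse_right_term_le[OF elim(5), folded W_def]
    show ?case
      using dense sparse total terms elim(1-4) unfolding W_def[symmetric] by argo
  qed
qed

lemma E_le_of_spread_nodes: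
  fixes f :: "rat poly"
  assumes "int_valued f" "degree f = n" "1 \<le> n" "n \<le> 42 * M" "42 * M \<le> n + 42"
    and small: "(78 * real M) ^ 42 * fact (42 * M) * (\<Sum>x\<in>spread_nodes M. node_weight (spread_nodes M) x) \<le> 1 / 2"
  shows "E f \<le> 78 * M"
proof -
  have "1 \<le> M"
    using assms(3,4) by linarith
  have "real (78 * M) ^ (42 * M - n) \<le> (78 * real M) ^ 42"
    using power_increasing[of "42 * M - n" 42 "78 * real M"] assms(5) \<open>1 \<le> M\<close> by simp
  then have "fact n * real (78 * M) ^ (42 * M - n) * (\<Sum>x\<in>spread_nodes M. node_weight (spread_nodes M) x)
      \<le> fact (42 * M) * (78 * real M) ^ 42 * (\<Sum>x\<in>spread_nodes M. node_weight (spread_nodes M) x)"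
    using assms(4) by (intro mult_right_mono mult_mono fact_mono sum_nonneg node_weight_nonneg) auto
  also have "\<dots> < 1"
    using small by (simp add: mult.commute mult.left_commute)
  finally show ?thesis
    using assms(1-4) \<open>1 \<le> M\<close> spread_nodes_subset[of M] card_spread_nodes[of M]
    by (intro E_le_if_node_weight_sum_small[where T = "spread_nodes M" and j = "42 * M - n"]) auto
qed

lemma t_const_bounds: "0 < t_const \<and> t_const \<le> 7 / 6"
proof -
  define g where "g t = t * (2 * ln t + 1 / 2)" for t :: real
  define c0 where "c0 = 2 * ln (2::real) - 1 / 2"
  have ln2: "2 / 3 \<le> ln (2::real)" "ln (2::real) \<le> 2 / 3 + 1 / 36"
    using ln2_ge_two_thirds ln_approx_bounds[of 2 1] by (simp_all add: power_divide)
  have "ln (6 / 7 :: real) \<le> - 1 / 7"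
    using ln_le_minus_one[of "6 / 7"] by simp
  then have ln76: "1 / 7 \<le> ln (7 / 6 :: real)"
    by (simp add: ln_div)
  have mono: "g a < g b" if "1 \<le> a" "a < b" for a b
    unfolding g_def using that by (intro mult_strict_mono) auto
  have below_one: "g s < c0" if "0 < s" "s < 1" for s
  proof -
    have "g s \<le> s * (1 / 2)"
      unfolding g_def using that by (intro mult_left_mono) auto
    then show ?thesis
      using that ln2 by (simp add: c0_def)
  qed
  obtain t where t: "1 \<le> t" "t \<le> 7 / 6" "g t = c0"
  proof -
    have "g 1 \<le> c0" "c0 \<le> g (7 / 6)"
      using ln2 ln76 by (simp_all add: g_def c0_def)
    moreover have "continuous_on {1..7 / 6} g"
      unfolding g_def by (intro continuous_intros) auto
    ultimately show ?thesis
      using IVT'[of g 1 c0 "7 / 6"] that by auto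
  qed
  have "s = t" if "0 < s" "g s = c0" for s
    using below_one[of s] mono[of s t] mono[of t s] that t by (cases s t rule: linorder_cases) force+
  then have "t_const = t"
    unfolding t_const_def using t by (intro the_equality) (auto simp: g_def c0_def)
  then show ?thesis
    using t by simp
qed

lemma c_const_ge: "13 / 7 \<le> c_const"
  using t_const_bounds by (simp add: c_const_def field_simps)

lemma E_le_for_large_degree:
  obtains N0 where "\<And>f. int_valued f \<Longrightarrow> N0 \<le> degree f \<Longrightarrow> real (E f) \<le> c_const * real (degree f) + 78"
proof -
  obtain M0 where small: "\<And>M. M0 \<le> M \<Longrightarrow>
      (78 * real M) ^ 42 * fact (42 * M) * (\<Sum>x\<in>spread_nodes M. node_weight (spread_nodes M) x) \<le> 1 / 2"
    using eventually_spread_nodes_weight_small unfolding eventually_sequentially by blast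
  show ?thesis
  proof (rule that[of "42 * M0 + 1"])
    fix f :: "rat poly"
    assume "int_valued f" "42 * M0 + 1 \<le> degree f"
    then have "E f \<le> 78 * (degree f div 42 + 1)"
      by (intro E_le_of_spread_nodes small) auto
    then have "real (E f) \<le> real (78 * (degree f div 42 + 1))"
      by (rule of_nat_mono)
    then have "real (E f) \<le> 78 * real (degree f div 42) + 78"
      by simp
    moreover have "real (degree f div 42) \<le> real (degree f) / 42"
      using of_nat_div_le_of_nat[of "degree f" 42] by simp
    moreover have "13 / 7 * real (degree f) \<le> c_const * real (degree f)"
      using c_const_ge by (rule mult_right_mono) simp
    ultimately show "real (E f) \<le> c_const * real (degree f) + 78"
      by simp
  qed
qed

theorem mainTheorem3:
  shows "\<exists>\<epsilon> :: nat \<Rightarrow> real. \<epsilon> \<in> o(\<lambda>n. real n) \<and>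
    (\<forall>f :: rat poly. int_valued f \<longrightarrow> degree f \<ge> 1 \<longrightarrow>
       real (E f) \<le> c_const * real (degree f) + \<epsilon> (degree f))"
proof -
  obtain N0 where large: "\<And>f. int_valued f \<Longrightarrow> N0 \<le> degree f \<Longrightarrow> real (E f) \<le> c_const * real (degree f) + 78"
    using E_le_for_large_degree by blast
  define \<epsilon> where "\<epsilon> n = (if N0 \<le> n then 78 else 2 * real n)" for n
  have "\<forall>\<^sub>F n in sequentially. \<epsilon> n = 78"
    unfolding \<epsilon>_def eventually_sequentially by auto
  then have "\<epsilon> \<in> o(\<lambda>n. real n) \<longleftrightarrow> (\<lambda>n::nat. 78 :: real) \<in> o(\<lambda>n. real n)"
    by (rule landau_o.small.in_cong)
  then have "\<epsilon> \<in> o(\<lambda>n. real n)"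
    by simp real_asymp
  moreover have "real (E f) \<le> c_const * real (degree f) + \<epsilon> (degree f)"
    if "int_valued f" "1 \<le> degree f" for f
  proof (cases "N0 \<le> degree f")
    case False
    have "real (E f) \<le> real (2 * degree f)"
      using E_le_twice_degree[OF that(2)] by (rule of_nat_mono)
    moreover have "0 \<le> c_const * real (degree f)"
      using c_const_ge by simp
    ultimately show ?thesis
      using False by (simp add: \<epsilon>_def)
  qed (use large[OF that(1)] in \<open>simp add: \<epsilon>_def\<close>)
  ultimately show ?thesis
    by blast
qed

end
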